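(* Consider the following conjunctive hierarchical secret sharing scheme. Setting. Let $\mathcal{P}=\{1,\dots,n\}$ be partitioned into consecutive blocks $\mathcal{P}_\ell=\{N_{\ell-1}+1,\dots,N_\ell\}$, $\ell\in[m]$, where $N_0=0$ and $N_\ell=\sum_{w=1}^{\ell}|\mathcal{P}_w|$, so $\bigcup_{w=1}^{\ell}\mathcal{P}_w=[N_\ell]$. Let $1\le t_1<\dots<t_m$ with $t_\ell\le N_\ell$. The access structure is $\Gamma=\{\mathcal{A}\subseteq\mathcal{P}: |\mathcal{A}\cap(\bigcup_{w=1}^{\ell}\mathcal{P}_w)|\ge t_\ell\text{ for all }\ell\in[m]\}$. Public parameters. A prime $m_0$ and integers $m_1,\dots,m_n$ with $\gcd(m_i,m_j)=1$ for $0\le i<j\le n$, $m_0<m_1<\dots<m_n$, and $km_0<m_i<km_0+m_0^{\theta}$ for all $i\in[n]$, for some reals $k\ge1$, $\theta\in(0,1)$; distinct public functions $h_1,\dots,h_m$ with $h_\ell(x,\ell)\in\mathbb{Z}_{m_i}$ for $x\in\mathbb{Z}_{m_i}$. Share generation. For a secret $s\in\mathbb{Z}_{m_0}$ the dealer chooses $\delta_1,\dots,\delta_{m-1}\in\mathbb{Z}_{m_0}$, sets $\delta_m=(s-\delta_1-\dots-\delta_{m-1})\bmod m_0$, and chooses integers $\alpha_\ell$ with $0\le y_\ell:=\delta_\ell+\alpha_\ell m_0<\prod_{i=1}^{t_\ell}m_i$ for $\ell\in[m]$. It chooses $c_i\in\mathbb{Z}_{m_i}$ for $i\in[N_{m-1}]$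 and gives participant $i$ the share $s_i=c_i$ if $i\in[N_{m-1}]$ and $s_i=y_m\bmod m_i$ if $i\in\{N_{m-1}+1,\dots,N_m\}$. For every $i\in[N_{m-1}]$, with $\ell_1\in[m-1]$ such that $i\in\mathcal{P}_{\ell_1}$, it publishes $w_i^{(\ell)}=(y_\ell-h_\ell(s_i,\ell))\bmod m_i$ for all $\ell\in\{\ell_1,\dots,m\}$. Reconstruction. For $\mathcal{A}\in\Gamma$ and each $\ell\in[m]$, with $\mathcal{A}^{(\ell)}=\mathcal{A}\cap[N_\ell]$, compute for $i\in\mathcal{A}^{(\ell)}$: $s_i^{(\ell)}=h_\ell(s_i,\ell)+w_i^{(\ell)}$ if $\ell\le m-1$, or if $\ell=m$ and $i\le N_{m-1}$; $s_i^{(m)}=s_i$ if $i>N_{m-1}$. Compute $Y_\ell=\left(\sum_{i\in\mathcal{A}^{(\ell)}}\lambda_iM_is_i^{(\ell)}\right)\bmod M$ where $M=\prod_{i\in\mathcal{A}^{(\ell)}}m_i$, $M_i=M/m_i$, $\lambda_i\equiv M_i^{-1}\pmod{m_i}$, and output $(\sum_{\ell=1}^{m}(Y_\ell\bmod m_0))\bmod m_0$. Claim. For every secret $s\in\mathbb{Z}_{m_0}$, every admissible choice of the $\delta_\ell,\alpha_\ell,c_i$, and every $\mathcal{A}\in\Gamma$, one has $Y_\ell=y_\ell$ and $Y_\ell\bmod m_0=\delta_\ell$ for every $\ell\in[m]$, and the reconstruction outputs $s$.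
   Context: $\mathbb{Z}_q=\{0,\dots,q-1\}$, $x\bmod q$ is the least nonnegative residue, $[n]=\{1,\dots,n\}$. The functions $h_\ell$ are intended to be one-way functions; no property beyond being fixed public maps is used. *)

theory Defs
  imports "HOL-Number_Theory.Number_Theory" Complex_Main
begin

text \<open>Levels are indexed by l in {1..m}; the blocks are
  P_l = {N(l-1)+1..N l} with N 0 = 0; participants are {1..N m}.
  Moduli m_0,...,m_n are given by mm :: nat => int (mm 0 = m_0).
  The public function h_l applied to (x,l) is written h l x l.\<close>

definition Gamma :: "nat \<Rightarrow> (nat \<Rightarrow> nat) \<Rightarrow> (nat \<Rightarrow> nat) \<Rightarrow> nat set set" where
  "Gamma m N t = {A. A \<subseteq> {1..N m} \<and> (\<forall>l\<in>{1..m}. card (A \<inter> {1..N l}) \<ge> t l)}"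

definition share :: "nat \<Rightarrow> (nat \<Rightarrow> nat) \<Rightarrow> (nat \<Rightarrow> int) \<Rightarrow> (nat \<Rightarrow> int)
    \<Rightarrow> (nat \<Rightarrow> int) \<Rightarrow> nat \<Rightarrow> int" where
  "share m N mm c y i = (if i \<le> N (m - 1) then c i else y m mod mm i)"

text \<open>Published value w_i^(l) (only used for i in [N_(m-1)] and l at least
  the block index of i).\<close>
definition pubw :: "nat \<Rightarrow> (nat \<Rightarrow> nat) \<Rightarrow> (nat \<Rightarrow> int) \<Rightarrow> (nat \<Rightarrow> int \<Rightarrow> nat \<Rightarrow> int)
    \<Rightarrow> (nat \<Rightarrow> int) \<Rightarrow> (nat \<Rightarrow> int) \<Rightarrow> nat \<Rightarrow> nat \<Rightarrow> int" where
  "pubw m N mm h c y i l = (y l - h l (share m N mm c y i) l) mod mm i"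

definition rshare :: "nat \<Rightarrow> (nat \<Rightarrow> nat) \<Rightarrow> (nat \<Rightarrow> int) \<Rightarrow> (nat \<Rightarrow> int \<Rightarrow> nat \<Rightarrow> int)
    \<Rightarrow> (nat \<Rightarrow> int) \<Rightarrow> (nat \<Rightarrow> int) \<Rightarrow> nat \<Rightarrow> nat \<Rightarrow> int" where
  "rshare m N mm h c y i l =
     (if l \<le> m - 1 \<or> i \<le> N (m - 1)
      then h l (share m N mm c y i) l + pubw m N mm h c y i l
      else share m N mm c y i)"

text \<open>Y_l; lam l i is the chosen inverse lambda_i of M_i modulo m_i at level l.\<close>
definition Yrec :: "nat \<Rightarrow> (nat \<Rightarrow> nat) \<Rightarrow> (nat \<Rightarrow> int) \<Rightarrow> (nat \<Rightarrow> int \<Rightarrow> nat \<Rightarrow> int)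
    \<Rightarrow> (nat \<Rightarrow> int) \<Rightarrow> (nat \<Rightarrow> int) \<Rightarrow> (nat \<Rightarrow> nat \<Rightarrow> int) \<Rightarrow> nat set \<Rightarrow> nat \<Rightarrow> int" where
  "Yrec m N mm h c y lam A l =
     (let Al = A \<inter> {1..N l}; M = (\<Prod>i\<in>Al. mm i) in
      (\<Sum>i\<in>Al. lam l i * (M div mm i) * rshare m N mm h c y i l) mod M)"

definition recon_output :: "nat \<Rightarrow> (nat \<Rightarrow> nat) \<Rightarrow> (nat \<Rightarrow> int) \<Rightarrow> (nat \<Rightarrow> int \<Rightarrow> nat \<Rightarrow> int)
    \<Rightarrow> (nat \<Rightarrow> int) \<Rightarrow> (nat \<Rightarrow> int) \<Rightarrow> (nat \<Rightarrow> nat \<Rightarrow> int) \<Rightarrow> nat set \<Rightarrow> int" where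
  "recon_output m N mm h c y lam A = (\<Sum>l=1..m. Yrec m N mm h c y lam A l mod mm 0) mod mm 0"

end

theory Submission
  imports Defs
begin

text \<open>Each reconstructed value s_i^(l) is congruent to y_l modulo m_i, because the
  published w_i^(l) cancels h_l; so the Chinese remainder combination Y_l equals
  y_l mod M. An authorised set has at least t_l members among the first l blocks and
  the moduli increase, hence M \<ge> m_1 \<cdots> m_(t_l) > y_l and Y_l = y_l. Then
  Y_l mod m_0 = \<delta>_l, and the \<delta>_l are an additive sharing of s modulo m_0.\<close>

lemma cong_crt_combination:
  fixes mm lam r :: "'i \<Rightarrow> 'a :: {unique_euclidean_ring, semiring_gcd}"
  assumes fin: "finite S" and nz: "\<forall>i\<in>S. mm i \<noteq> 0"
    and cop: "\<forall>i\<in>S. \<forall>j\<in>S. i \<noteq> j \<longrightarrow> coprime (mm i) (mm j)"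
    and inv: "\<forall>i\<in>S. [lam i * ((\<Prod>j\<in>S. mm j) div mm i) = 1] (mod mm i)"
    and rc: "\<forall>i\<in>S. [r i = Y] (mod mm i)"
  shows "[(\<Sum>i\<in>S. lam i * ((\<Prod>j\<in>S. mm j) div mm i) * r i) = Y] (mod (\<Prod>j\<in>S. mm j))"
proof (rule cong_cong_prod_coprime[OF _ cop], intro ballI)
  fix k assume k: "k \<in> S"
  have cofactor_eq: "(\<Prod>j\<in>S. mm j) div mm i = (\<Prod>j\<in>S-{i}. mm j)" if "i \<in> S" for i
    using fin that nz by (simp add: prod.remove)
  have "mm k dvd (\<Sum>i\<in>S-{k}. lam i * ((\<Prod>j\<in>S. mm j) div mm i) * r i)"
  proof (rule dvd_sum)
    fix i assume i: "i \<in> S - {k}"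
    have "mm k dvd (\<Prod>j\<in>S-{i}. mm j)" using fin i k by (intro dvd_prodI) auto
    then show "mm k dvd lam i * ((\<Prod>j\<in>S. mm j) div mm i) * r i"
      using cofactor_eq[of i] i by simp
  qed
  then have others: "[(\<Sum>i\<in>S-{k}. lam i * ((\<Prod>j\<in>S. mm j) div mm i) * r i) = 0] (mod mm k)"
    by (simp add: cong_0_iff)
  have own: "[lam k * ((\<Prod>j\<in>S. mm j) div mm k) * r k = 1 * Y] (mod mm k)"
    using inv rc k by (intro cong_mult) auto
  have "(\<Sum>i\<in>S. lam i * ((\<Prod>j\<in>S. mm j) div mm i) * r i)
      = lam k * ((\<Prod>j\<in>S. mm j) div mm k) * r k
        + (\<Sum>i\<in>S-{k}. lam i * ((\<Prod>j\<in>S. mm j) div mm i) * r i)"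
    using fin k by (simp add: sum.remove)
  then show "[(\<Sum>i\<in>S. lam i * ((\<Prod>j\<in>S. mm j) div mm i) * r i) = Y] (mod mm k)"
    using cong_add[OF own others] by simp
qed

lemma prod_initial_segment_le_prod:
  fixes f :: "nat \<Rightarrow> 'a :: linordered_semidom"
  assumes mono: "\<And>a b. 1 \<le> a \<Longrightarrow> a \<le> b \<Longrightarrow> b \<le> K \<Longrightarrow> f a \<le> f b"
    and ge1: "\<And>a. 1 \<le> a \<Longrightarrow> a \<le> K \<Longrightarrow> 1 \<le> f a"
    and "S \<subseteq> {1..K}" and "t \<le> card S"
  shows "(\<Prod>i=1..t. f i) \<le> (\<Prod>i\<in>S. f i)"
  using assms(3,4)
proof (induction t arbitrary: S)
  case 0
  then show ?case using ge1 by (auto intro!: prod_ge_1)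
next
  case (Suc t)
  have fin: "finite S" using Suc.prems finite_subset by blast
  then have "S \<noteq> {}" using Suc.prems by auto
  define a where "a = Max S"
  have aS: "a \<in> S" using fin \<open>S \<noteq> {}\<close> a_def by simp
  have aK: "a \<le> K" using aS Suc.prems by auto
  have "S \<subseteq> {1..a}" using Suc.prems fin a_def by auto
  then have "Suc t \<le> a" using card_mono[of "{1..a}" S] Suc.prems by simp
  have "t \<le> card (S - {a})" using Suc.prems fin aS by simp
  then have ih: "(\<Prod>i=1..t. f i) \<le> (\<Prod>i\<in>S-{a}. f i)"
    using Suc.IH[of "S - {a}"] Suc.prems by blast
  have "0 \<le> (\<Prod>i=1..t. f i)"
    using ge1 \<open>Suc t \<le> a\<close> aK by (intro prod_nonneg) (force intro: order_trans[OF zero_le_one])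
  then have "(\<Prod>i=1..t. f i) * f (Suc t) \<le> (\<Prod>i\<in>S-{a}. f i) * f a"
    using ih mono[OF _ \<open>Suc t \<le> a\<close> aK] ge1[of "Suc t"] \<open>Suc t \<le> a\<close> aK
    by (intro mult_mono) (auto intro: order_trans[OF zero_le_one])
  then show ?case
    using fin aS by (simp add: prod.nat_ivl_Suc' prod.remove mult.commute)
qed

lemma additive_sharing_sum_mod:
  fixes \<delta> :: "nat \<Rightarrow> int"
  assumes "m \<ge> 1" and "\<delta> m = (s - (\<Sum>l=1..m - 1. \<delta> l)) mod p" and "0 \<le> s" "s < p"
  shows "(\<Sum>l=1..m. \<delta> l) mod p = s"
proof -
  obtain m' where m': "m = Suc m'" using \<open>m \<ge> 1\<close> by (cases m) auto
  have "(\<Sum>l=1..m. \<delta> l) mod p = ((\<Sum>l=1..m - 1. \<delta> l) + \<delta> m) mod p"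
    using m' by simp
  also have "\<dots> = s mod p" using assms(2) by (simp add: mod_add_right_eq)
  finally show ?thesis using assms(3,4) by simp
qed

lemma rshare_cong:
  assumes "l \<le> m"
  shows "[rshare m N mm h c y i l = y l] (mod mm i)"
proof (cases "l \<le> m - 1 \<or> i \<le> N (m - 1)")
  case True
  then show ?thesis
    unfolding rshare_def pubw_def cong_def by (simp add: mod_add_right_eq)
next
  case False
  then have "l = m" using assms by auto
  with False show ?thesis unfolding rshare_def share_def by (simp add: cong_def)
qed

lemma Yrec_eq:
  assumes "l \<le> m"
    and A_sub: "A \<inter> {1..N l} \<subseteq> {1..K}"
    and card_A: "t l \<le> card (A \<inter> {1..N l})"
    and mm0: "1 \<le> mm 0"
    and mm_incr: "\<forall>i<K. mm i < mm (Suc i)"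
    and cop: "\<forall>i j. i < j \<and> j \<le> K \<longrightarrow> coprime (mm i) (mm j)"
    and inv: "\<forall>i\<in>A \<inter> {1..N l}.
                [lam l i * ((\<Prod>j\<in>A \<inter> {1..N l}. mm j) div mm i) = 1] (mod mm i)"
    and y_range: "0 \<le> y l" "y l < (\<Prod>i=1..t l. mm i)"
  shows "Yrec m N mm h c y lam A l = y l"
proof -
  define Al where "Al = A \<inter> {1..N l}"
  define M where "M = (\<Prod>j\<in>Al. mm j)"
  have mm_mono: "mm a \<le> mm b" if "a \<le> b" "b \<le> K" for a b
    using lift_Suc_mono_le_ivl[of "{..<K}" mm a b] mm_incr that by fastforce
  have mm_ge1: "1 \<le> mm a" if "a \<le> K" for a
    using mm_mono[of 0 a] that mm0 by simp
  have Al_cop: "\<forall>i\<in>Al. \<forall>j\<in>Al. i \<noteq> j \<longrightarrow> coprime (mm i) (mm j)"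
    using A_sub cop unfolding Al_def
    by (auto simp: subset_iff) (metis coprime_commute linorder_neqE_nat)
  have "\<forall>i\<in>Al. mm i \<noteq> 0"
    using A_sub mm_ge1 unfolding Al_def by fastforce
  then have "[(\<Sum>i\<in>Al. lam l i * (M div mm i) * rshare m N mm h c y i l) = y l] (mod M)"
    unfolding M_def using Al_cop inv rshare_cong[OF \<open>l \<le> m\<close>]
    by (intro cong_crt_combination) (auto simp: Al_def)
  moreover have "y l < M"
    using y_range prod_initial_segment_le_prod[of K mm Al "t l"] mm_mono mm_ge1 A_sub card_A
    unfolding M_def Al_def by fastforce
  ultimately show ?thesis
    using y_range unfolding Yrec_def Let_def Al_def M_def by (simp add: cong_def)
qed

theorem mainTheorem4:
  fixes m :: nat and N t :: "nat \<Rightarrow> nat" and mm :: "nat \<Rightarrow> int"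
    and k \<theta> :: real and h :: "nat \<Rightarrow> int \<Rightarrow> nat \<Rightarrow> int"
    and s :: int and \<delta> \<alpha> y c :: "nat \<Rightarrow> int"
    and lam :: "nat \<Rightarrow> nat \<Rightarrow> int" and A :: "nat set"
  assumes m_pos: "m \<ge> 1"
    and N0: "N 0 = 0"
    and N_blocks: "\<forall>l\<in>{1..m}. N (l - 1) < N l"
    and t1: "1 \<le> t 1"
    and t_mono: "\<forall>l\<in>{1..<m}. t l < t (Suc l)"
    and t_le: "\<forall>l\<in>{1..m}. t l \<le> N l"
    and m0_prime: "prime (mm 0)"
    and coprime: "\<forall>i j. i < j \<and> j \<le> N m \<longrightarrow> coprime (mm i) (mm j)"
    and mm_incr: "\<forall>i<N m. mm i < mm (Suc i)"
    and k_ge: "k \<ge> 1" and theta: "0 < \<theta>" "\<theta> < 1"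
    and mm_bounds: "\<forall>i\<in>{1..N m}. k * of_int (mm 0) < of_int (mm i)
                        \<and> of_int (mm i) < k * of_int (mm 0) + of_int (mm 0) powr \<theta>"
    and h_distinct: "\<forall>l1\<in>{1..m}. \<forall>l2\<in>{1..m}. l1 \<noteq> l2 \<longrightarrow> h l1 \<noteq> h l2"
    and h_range: "\<forall>l\<in>{1..m}. \<forall>i\<in>{1..N m}. \<forall>x. 0 \<le> x \<and> x < mm i
                     \<longrightarrow> 0 \<le> h l x l \<and> h l x l < mm i"
    and s_range: "0 \<le> s" "s < mm 0"
    and \<delta>_range: "\<forall>l\<in>{1..m - 1}. 0 \<le> \<delta> l \<and> \<delta> l < mm 0"
    and \<delta>_m: "\<delta> m = (s - (\<Sum>l=1..m - 1. \<delta> l)) mod mm 0"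
    and y_def: "\<forall>l\<in>{1..m}. y l = \<delta> l + \<alpha> l * mm 0"
    and y_range: "\<forall>l\<in>{1..m}. 0 \<le> y l \<and> y l < (\<Prod>i=1..t l. mm i)"
    and c_range: "\<forall>i\<in>{1..N (m - 1)}. 0 \<le> c i \<and> c i < mm i"
    and A_acc: "A \<in> Gamma m N t"
    and lam_inv: "\<forall>l\<in>{1..m}. \<forall>i\<in>A \<inter> {1..N l}.
                    [lam l i * ((\<Prod>j\<in>A \<inter> {1..N l}. mm j) div mm i) = 1] (mod mm i)"
  shows "(\<forall>l\<in>{1..m}. Yrec m N mm h c y lam A l = y l
                  \<and> Yrec m N mm h c y lam A l mod mm 0 = \<delta> l)
         \<and> recon_output m N mm h c y lam A = s"
proof -
  have m0_gt1: "mm 0 > 1" using m0_prime prime_gt_1_int by blast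
  have N_le: "N l \<le> N m" if "l \<le> m" for l
  proof (rule lift_Suc_mono_le_ivl[of "{..<m}" N])
    show "N j \<le> N (Suc j)" if "j \<in> {..<m}" for j
      using N_blocks[rule_format, of "Suc j"] that by simp
  qed (use that in auto)
  have Y_eq: "Yrec m N mm h c y lam A l = y l" if l: "l \<in> {1..m}" for l
  proof (rule Yrec_eq[where K = "N m"])
    show "A \<inter> {1..N l} \<subseteq> {1..N m}" using N_le[of l] l by auto
    show "t l \<le> card (A \<inter> {1..N l})" using A_acc l by (simp add: Gamma_def)
    show "\<forall>i\<in>A \<inter> {1..N l}. [lam l i * ((\<Prod>j\<in>A \<inter> {1..N l}. mm j) div mm i) = 1] (mod mm i)"
      using lam_inv l by blast
    show "0 \<le> y l" "y l < (\<Prod>i=1..t l. mm i)" using y_range l by auto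
  qed (use l m0_gt1 mm_incr coprime in simp_all)
  have \<delta>_eq: "y l mod mm 0 = \<delta> l" if l: "l \<in> {1..m}" for l
  proof -
    have "0 \<le> \<delta> l \<and> \<delta> l < mm 0"
      using \<delta>_range \<delta>_m m0_gt1 l by (cases "l = m") auto
    then show ?thesis using y_def l by simp
  qed
  have "recon_output m N mm h c y lam A = (\<Sum>l=1..m. \<delta> l) mod mm 0"
    unfolding recon_output_def using Y_eq \<delta>_eq by (intro arg_cong[where f = "\<lambda>x. x mod mm 0"] sum.cong) auto
  then show ?thesis
    using Y_eq \<delta>_eq additive_sharing_sum_mod[OF m_pos \<delta>_m s_range] by simp
qed

end
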